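(* Let $R$ be a monad on Sets and $LM$ a left $R$-module with values in Sets. A pair of subsets $C\subset\coprod_{n\ge0}\prod_{i=0}^{n-1}LM([i])$ and $\widetilde{C}\subset\coprod_{n\ge0}(\prod_{i=0}^{n}LM([i]))\times R([n])$ corresponds to a C-subsystem of $CC(R,LM)$ (i.e. there is a C-subsystem $CC$ with $Ob(CC)=C$ and $\widetilde{Ob}(CC)=\widetilde{C}$) if and only if the following conditions hold, for all sequences and elements for which the expressions are well formed (with $n=l(\Gamma)$ throughout): (1) $(\rhd_C)$, i.e. the empty sequence is in $C$; (2) $(\Gamma,T\rhd_C)\Rightarrow(\Gamma\rhd_C)$; (3) $(\Gamma\vdash_{\widetilde C}r:R)\Rightarrow(\Gamma,R\rhd_C)$; (4) $(\Gamma,T\rhd_C)\wedge(\Gamma,\Delta\vdash_{\widetilde C}r:R)\Rightarrow(\Gamma,T,t_{n+1}(\Delta)\vdash_{\widetilde C}t_{n+1}(r):t_{n+1}(R))$; (5) $(\Gamma\vdash_{\widetilde C}s:S)\wedge(\Gamma,S,\Delta\vdash_{\widetilde C}r:R)\Rightarrow(\Gamma,s_{n+1}(\Delta[s/n+1])\vdash_{\widetilde C}s_{n+1}(r[s/n+1]):s_{n+1}(R[s/n+1]))$; (6) $(\Gamma,T\rhd_C)\Rightarrow(\Gamma,T\vdash_{\widetilde C}n+1:t_{n+1}(T))$.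
   Context: Notation: $[n]=\{1,\dots,n\}$. $R$ is a monad on Sets given by $\eta_X:X\to R(X)$ and $\mathrm{bind}(f):R(X)\to R(Y)$ for $f:X\to R(Y)$ (with $\mathrm{bind}(\eta_X)=\mathrm{id}$, $\mathrm{bind}(f)\circ\eta_X=f$, $\mathrm{bind}(\mathrm{bind}(g)\circ f)=\mathrm{bind}(g)\circ\mathrm{bind}(f)$); $LM$ is a left $R$-module: a functor with maps $\rho(f):LM(X)\to LM(Y)$, $\rho(\eta_X)=\mathrm{id}$, $\rho(g)\circ\rho(f)=\rho(\mathrm{bind}(g)\circ f)$. Elements of $Y$ are regarded in $R(Y)$ via $\eta_Y$. For $E\in LM([m])$ (resp. $R([m])$), $E(f_1/1,\dots,f_m/m)$ means $\rho(f)(E)$ (resp. $\mathrm{bind}(f)(E)$) with $f(i)=f_i$. For $E\in LM([m])$ or $R([m])$ with $m\ge n$: $t_{n+1}(E):=E(1/1,\dots,n/n,n+2/n+1,\dots,m+1/m)\in LM([m+1])$ (resp. $R([m+1])$). For $m\ge n+1$ and $s\in R([n])$ (regarded in $R([m-1])$ via $[n]\subset[m-1]$): $s_{n+1}(E[s/n+1]):=E(1/1,\dots,n/n,s/n+1,n+1/n+2,\dots,m-1/m)\in LM([m-1])$ (resp. $R([m-1])$). These are applied componentwise to sequences $\Delta=(D_1,\dots,D_k)$. $CC(R,LM)$: objects are sequences $\Gamma=(T_1,\dots,T_n)$ with $T_i\in LM([i-1])$, $l(\Gamma)=n$, $ft(T_1,\dots,T_n)=(T_1,\dots,T_{n-1})$,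 $pt=()$; morphisms $(E_1,\dots,E_m)\to(T_1,\dots,T_n)$ are elements of $R([m])^n$, the composite of $f=(f_1,\dots,f_n)$ followed by $g=(g_1,\dots,g_k)$ being $(g_j(f_1/1,\dots,f_n/n))_j$, identities $(1,\dots,n)$; $p_X=(1,\dots,n):(T_1,\dots,T_{n+1})\to(T_1,\dots,T_n)$; for $X=(T_1,\dots,T_{n+1})$ and $f=(f_1,\dots,f_n):(R_1,\dots,R_m)\to ft(X)$, $f^*X=(R_1,\dots,R_m,T_{n+1}(f_1/1,\dots,f_n/n))$ and $q(f,X)=(f_1,\dots,f_n,m+1)$. $\widetilde{Ob}$ of a subcategory is its set of morphisms $s:ft(X)\to X$ with $l(X)>0$, $p_X\circ s=\mathrm{id}$; the section $(1,\dots,n,t):(T_1,\dots,T_n)\to(T_1,\dots,T_n,T)$ ($T\in LM([n])$, $t\in R([n])$) is identified with the sequence $(T_1,\dots,T_n,T,t)$. A C-subsystem of $CC(R,LM)$ is a subcategory $CC$ containing $pt$ such that for every object $X$ of $CC$ with $l(X)>0$: $ft(X)$ and $p_X$ are in $CC$; for every morphism $f:Y\to ft(X)$ of $CC$, $f^*X$ and $q(f,X)$ are in $CC$; and for every morphism $f:Y\to X$ of $CC$ the unique morphism $s_f:Y\to(p_X\circ f)^*X$ with $p\circ s_f=\mathrm{id}_Y$ and $q(p_X\circ f,X)\circ s_f=f$ is in $CC$. Notation: $(T_1,\dots,T_n\rhd_C)$ means $(T_1,\dots,T_n)\in C$; for $\Gamma=(T_1,\dots,T_n)$, $T\in LM([n])$,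 $t\in R([n])$, $(\Gamma\vdash_{\widetilde C}t:T)$ means $(T_1,\dots,T_n,T,t)\in\widetilde C$. Commas denote concatenation of sequences; $\Delta$ may be empty. *)

theory Defs
  imports Main
begin

text \<open>
  A monad R on Sets together with a left R-module LM, restricted to the finite
  ordinals [m] = {1..m} (the only sets on which CC(R,LM) evaluates R and LM).
  Rc m is R([m]), Lc m is LM([m]), eta m i is eta_[m](i), bnd m k f is bind(f)
  for f : [m] -> R([k]) and rho m k f is rho(f) : LM([m]) -> LM([k]).
\<close>

record ('r, 'l) monmod =
  Rc  :: "nat \<Rightarrow> 'r set"
  eta :: "nat \<Rightarrow> nat \<Rightarrow> 'r"
  bnd :: "nat \<Rightarrow> nat \<Rightarrow> (nat \<Rightarrow> 'r) \<Rightarrow> 'r \<Rightarrow> 'r"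
  Lc  :: "nat \<Rightarrow> 'l set"
  rho :: "nat \<Rightarrow> nat \<Rightarrow> (nat \<Rightarrow> 'r) \<Rightarrow> 'l \<Rightarrow> 'l"

definition kl_map :: "('r, 'l) monmod \<Rightarrow> nat \<Rightarrow> nat \<Rightarrow> (nat \<Rightarrow> 'r) \<Rightarrow> bool" where
  "kl_map M m k f \<longleftrightarrow> (\<forall>i\<in>{1..m}. f i \<in> Rc M k)"

definition fin_monad :: "('r, 'l) monmod \<Rightarrow> bool" where
  "fin_monad M \<longleftrightarrow>
     (\<forall>m. \<forall>i\<in>{1..m}. eta M m i \<in> Rc M m) \<and>
     (\<forall>m k f r. kl_map M m k f \<and> r \<in> Rc M m \<longrightarrow> bnd M m k f r \<in> Rc M k) \<and>
     (\<forall>m k f g r. kl_map M m k f \<and> kl_map M m k g \<and> (\<forall>i\<in>{1..m}. f i = g i) \<and> r \<in> Rc M m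
        \<longrightarrow> bnd M m k f r = bnd M m k g r) \<and>
     (\<forall>m r. r \<in> Rc M m \<longrightarrow> bnd M m m (eta M m) r = r) \<and>
     (\<forall>m k f i. kl_map M m k f \<and> i \<in> {1..m} \<longrightarrow> bnd M m k f (eta M m i) = f i) \<and>
     (\<forall>m k l f g r. kl_map M m k f \<and> kl_map M k l g \<and> r \<in> Rc M m \<longrightarrow>
        bnd M m l (\<lambda>i. bnd M k l g (f i)) r = bnd M k l g (bnd M m k f r))"

definition fin_module :: "('r, 'l) monmod \<Rightarrow> bool" where
  "fin_module M \<longleftrightarrow>
     (\<forall>m k f E. kl_map M m k f \<and> E \<in> Lc M m \<longrightarrow> rho M m k f E \<in> Lc M k) \<and>
     (\<forall>m k f g E. kl_map M m k f \<and> kl_map M m k g \<and> (\<forall>i\<in>{1..m}. f i = g i) \<and> E \<in> Lc M m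
        \<longrightarrow> rho M m k f E = rho M m k g E) \<and>
     (\<forall>m E. E \<in> Lc M m \<longrightarrow> rho M m m (eta M m) E = E) \<and>
     (\<forall>m k l f g E. kl_map M m k f \<and> kl_map M k l g \<and> E \<in> Lc M m \<longrightarrow>
        rho M k l g (rho M m k f E) = rho M m l (\<lambda>i. bnd M k l g (f i)) E)"

text \<open>Objects: lists [T_1,...,T_n] with T_i in LM([i-1]).
  Morphisms: triples (source, target, [f_1,...,f_n]).\<close>

definition cc_ob :: "('r, 'l) monmod \<Rightarrow> 'l list \<Rightarrow> bool" where
  "cc_ob M G \<longleftrightarrow> (\<forall>i<length G. G ! i \<in> Lc M i)"

definition cc_hom :: "('r, 'l) monmod \<Rightarrow> 'l list \<Rightarrow> 'l list \<Rightarrow> 'r list \<Rightarrow> bool" where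
  "cc_hom M G D f \<longleftrightarrow> cc_ob M G \<and> cc_ob M D \<and> length f = length D \<and>
     (\<forall>j<length f. f ! j \<in> Rc M (length G))"

definition tf :: "'r list \<Rightarrow> nat \<Rightarrow> 'r" where
  "tf f = (\<lambda>i. f ! (i - 1))"

text \<open>Composite of f (source of length m) followed by g: (g_j(f_1/1,...,f_n/n))_j.\<close>
definition cc_comp :: "('r, 'l) monmod \<Rightarrow> nat \<Rightarrow> 'r list \<Rightarrow> 'r list \<Rightarrow> 'r list" where
  "cc_comp M m f g = map (bnd M (length f) m (tf f)) g"

definition cc_id :: "('r, 'l) monmod \<Rightarrow> 'l list \<Rightarrow> 'r list" where
  "cc_id M G = map (eta M (length G)) [1..<Suc (length G)]"

definition cc_pl :: "('r, 'l) monmod \<Rightarrow> 'l list \<Rightarrow> 'r list" where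
  "cc_pl M X = map (eta M (length X)) [1..<length X]"

definition cc_p :: "('r, 'l) monmod \<Rightarrow> 'l list \<Rightarrow> 'l list \<times> 'l list \<times> 'r list" where
  "cc_p M X = (X, butlast X, cc_pl M X)"

definition incl :: "('r, 'l) monmod \<Rightarrow> nat \<Rightarrow> nat \<Rightarrow> 'r \<Rightarrow> 'r" where
  "incl M m k r = bnd M m k (eta M k) r"

definition cc_pb :: "('r, 'l) monmod \<Rightarrow> 'r list \<Rightarrow> 'l list \<Rightarrow> 'l list \<Rightarrow> 'l list" where
  "cc_pb M f Y X = Y @ [rho M (length X - 1) (length Y) (tf f) (last X)]"

definition cc_ql :: "('r, 'l) monmod \<Rightarrow> 'r list \<Rightarrow> 'l list \<Rightarrow> 'r list" where
  "cc_ql M f Y = map (incl M (length Y) (Suc (length Y))) f @ [eta M (Suc (length Y)) (Suc (length Y))]"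

definition cc_q :: "('r, 'l) monmod \<Rightarrow> 'l list \<Rightarrow> 'r list \<Rightarrow> 'l list \<Rightarrow> 'l list \<times> 'l list \<times> 'r list" where
  "cc_q M Y f X = (cc_pb M f Y X, X, cc_ql M f Y)"

definition cc_pf :: "('r, 'l) monmod \<Rightarrow> 'l list \<Rightarrow> 'l list \<Rightarrow> 'r list \<Rightarrow> 'r list" where
  "cc_pf M Y X f = cc_comp M (length Y) f (cc_pl M X)"

definition cc_sf :: "('r, 'l) monmod \<Rightarrow> 'l list \<Rightarrow> 'l list \<Rightarrow> 'r list \<Rightarrow> 'r list" where
  "cc_sf M Y X f = (THE s. cc_hom M Y (cc_pb M (cc_pf M Y X f) Y X) s \<and>
      cc_comp M (length Y) s (cc_pl M (cc_pb M (cc_pf M Y X f) Y X)) = cc_id M Y \<and>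
      cc_comp M (length Y) s (cc_ql M (cc_pf M Y X f) Y) = f)"

definition cc_subsystem ::
  "('r, 'l) monmod \<Rightarrow> 'l list set \<Rightarrow> ('l list \<times> 'l list \<times> 'r list) set \<Rightarrow> bool" where
  "cc_subsystem M Ob Mor \<longleftrightarrow>
     (\<forall>(G, D, f)\<in>Mor. cc_hom M G D f \<and> G \<in> Ob \<and> D \<in> Ob) \<and>
     (\<forall>G\<in>Ob. cc_ob M G \<and> (G, G, cc_id M G) \<in> Mor) \<and>
     (\<forall>G D T f g. (G, D, f) \<in> Mor \<and> (D, T, g) \<in> Mor \<longrightarrow> (G, T, cc_comp M (length G) f g) \<in> Mor) \<and>
     [] \<in> Ob \<and>
     (\<forall>X\<in>Ob. X \<noteq> [] \<longrightarrow> butlast X \<in> Ob \<and> cc_p M X \<in> Mor) \<and>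
     (\<forall>X\<in>Ob. X \<noteq> [] \<longrightarrow> (\<forall>Y f. (Y, butlast X, f) \<in> Mor \<longrightarrow>
         cc_pb M f Y X \<in> Ob \<and> cc_q M Y f X \<in> Mor)) \<and>
     (\<forall>Y X f. (Y, X, f) \<in> Mor \<and> X \<noteq> [] \<longrightarrow>
         (Y, cc_pb M (cc_pf M Y X f) Y X, cc_sf M Y X f) \<in> Mor)"

text \<open>Ob~ of a subcategory: sections s : ft X -> X (l X > 0, p_X o s = id),
  with (1,...,n,t) identified with (T_1,...,T_n,T,t), i.e. the pair (X, t).\<close>
definition tilde_ob :: "('r, 'l) monmod \<Rightarrow> ('l list \<times> 'l list \<times> 'r list) set \<Rightarrow> ('l list \<times> 'r) set" where
  "tilde_ob M Mor = {(X, last s) | X s. X \<noteq> [] \<and> (butlast X, X, s) \<in> Mor \<and>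
      cc_comp M (length X - 1) s (cc_pl M X) = cc_id M (butlast X)}"

definition wk_map :: "('r, 'l) monmod \<Rightarrow> nat \<Rightarrow> nat \<Rightarrow> nat \<Rightarrow> 'r" where
  "wk_map M n m = (\<lambda>i. eta M (Suc m) (if i \<le> n then i else Suc i))"

definition wk_L :: "('r, 'l) monmod \<Rightarrow> nat \<Rightarrow> nat \<Rightarrow> 'l \<Rightarrow> 'l" where
  "wk_L M n m E = rho M m (Suc m) (wk_map M n m) E"

definition wk_R :: "('r, 'l) monmod \<Rightarrow> nat \<Rightarrow> nat \<Rightarrow> 'r \<Rightarrow> 'r" where
  "wk_R M n m E = bnd M m (Suc m) (wk_map M n m) E"

text \<open>t_{n+1} applied componentwise to Delta = (D_1,...,D_k) with D_j in LM([n+j-1]).\<close>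
definition wk_seq :: "('r, 'l) monmod \<Rightarrow> nat \<Rightarrow> 'l list \<Rightarrow> 'l list" where
  "wk_seq M n D = map (\<lambda>j. wk_L M n (n + j) (D ! j)) [0..<length D]"

definition sb_map :: "('r, 'l) monmod \<Rightarrow> nat \<Rightarrow> 'r \<Rightarrow> nat \<Rightarrow> nat \<Rightarrow> 'r" where
  "sb_map M n s m = (\<lambda>i. if i \<le> n then eta M (m - 1) i
                         else if i = Suc n then incl M n (m - 1) s
                         else eta M (m - 1) (i - 1))"

definition sb_L :: "('r, 'l) monmod \<Rightarrow> nat \<Rightarrow> 'r \<Rightarrow> nat \<Rightarrow> 'l \<Rightarrow> 'l" where
  "sb_L M n s m E = rho M m (m - 1) (sb_map M n s m) E"

definition sb_R :: "('r, 'l) monmod \<Rightarrow> nat \<Rightarrow> 'r \<Rightarrow> nat \<Rightarrow> 'r \<Rightarrow> 'r" where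
  "sb_R M n s m E = bnd M m (m - 1) (sb_map M n s m) E"

text \<open>Componentwise on Delta = (D_1,...,D_k) with D_j in LM([n+1+j-1]).\<close>
definition sb_seq :: "('r, 'l) monmod \<Rightarrow> nat \<Rightarrow> 'r \<Rightarrow> 'l list \<Rightarrow> 'l list" where
  "sb_seq M n s D = map (\<lambda>j. sb_L M n s (Suc n + j) (D ! j)) [0..<length D]"

end

theory Submission
  imports Defs
begin

text \<open>
  Necessity: in a C-subsystem \<open>p\<^sub>X \<circ> f\<close> drops the last component of \<open>f\<close> and
  \<open>s\<^sub>f = (1, \<dots>, m, last f)\<close>, so every morphism \<open>f : Y \<rightarrow> X\<close> yields the section
  \<open>Y \<turnstile> last f : (last X)[f]\<close>, and composing a section with \<open>f\<close> substitutes \<open>f\<close> into it.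
  Conditions (4) and (5) are the instances where \<open>f\<close> is the projection \<open>(\<Gamma>, T) \<rightarrow> \<Gamma>\<close>
  and the section \<open>(1, \<dots>, n, s) : \<Gamma> \<rightarrow> (\<Gamma>, S)\<close>, after lifting \<open>f\<close> over the telescope
  \<open>\<Delta>\<close> by iterated \<open>q\<close>; (6) is the section of the identity of \<open>(\<Gamma>, T)\<close>.

  Sufficiency: call \<open>f : Y \<rightarrow> X\<close> a morphism when \<open>Y, X \<in> C\<close> and
  \<open>Y \<turnstile> f\<^sub>i : X\<^sub>i[f\<^sub>1, \<dots>, f\<^sub>i\<^sub>-\<^sub>1]\<close> for all \<open>i\<close>. Weakening by \<open>Y\<close> (iterated (4)) and then
  substituting the components of \<open>f\<close> one variable at a time (iterated (5)) shows that
  \<open>Ct\<close> is closed under substitution along morphisms. Together with the variables obtained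
  from (6) and (4) this yields identities, projections, composites, pullbacks and the
  sections \<open>s\<^sub>f\<close>, and the sections of the resulting subsystem are exactly \<open>Ct\<close>.
\<close>

lemma last_eq_nth: "length xs = Suc n \<Longrightarrow> last xs = xs ! n"
  by (cases xs rule: rev_cases) auto

lemma tf_Suc [simp]: "tf f (Suc i) = f ! i"
  by (simp add: tf_def)

lemma tf_butlast: "1 \<le> l \<Longrightarrow> l < length f \<Longrightarrow> tf (butlast f) l = tf f l"
  by (simp add: tf_def nth_butlast)

lemma length_cc_id [simp]: "length (cc_id M G) = length G"
  by (simp add: cc_id_def del: upt_Suc)

lemma nth_cc_id [simp]: "i < length G \<Longrightarrow> cc_id M G ! i = eta M (length G) (Suc i)"
  by (simp add: cc_id_def del: upt_Suc)

lemma nth_cc_id_snoc_length [simp]: "(cc_id M G @ [r]) ! length G = r"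
  by (metis length_cc_id nth_append_length)

lemma length_cc_pl [simp]: "length (cc_pl M X) = length X - 1"
  by (simp add: cc_pl_def)

lemma nth_cc_pl [simp]: "i < length X - 1 \<Longrightarrow> cc_pl M X ! i = eta M (length X) (Suc i)"
  by (simp add: cc_pl_def)

lemma length_cc_comp [simp]: "length (cc_comp M m f g) = length g"
  by (simp add: cc_comp_def)

lemma nth_cc_comp [simp]: "i < length g \<Longrightarrow> cc_comp M m f g ! i = bnd M (length f) m (tf f) (g ! i)"
  by (simp add: cc_comp_def)

lemma length_cc_ql [simp]: "length (cc_ql M f Y) = Suc (length f)"
  by (simp add: cc_ql_def)

lemma cc_ob_append:
  "cc_ob M (A @ B) \<longleftrightarrow> cc_ob M A \<and> (\<forall>j<length B. B ! j \<in> Lc M (length A + j))"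
proof -
  have "(\<forall>i<length (A @ B). (A @ B) ! i \<in> Lc M i) \<longleftrightarrow>
      (\<forall>i<length A. (A @ B) ! i \<in> Lc M i) \<and> (\<forall>j<length B. (A @ B) ! (length A + j) \<in> Lc M (length A + j))"
    by (auto simp del: nth_append_length_plus) (metis add_diff_inverse_nat nat_add_left_cancel_less)
  then show ?thesis
    by (simp add: cc_ob_def nth_append)
qed

lemma cc_ob_snoc: "cc_ob M (A @ [E]) \<longleftrightarrow> cc_ob M A \<and> E \<in> Lc M (length A)"
  by (simp add: cc_ob_append)

lemma cc_obD: "cc_ob M G \<Longrightarrow> i < length G \<Longrightarrow> G ! i \<in> Lc M i"
  by (simp add: cc_ob_def)

locale monad_module =
  fixes M :: "('r, 'l) monmod"
  assumes monad: "fin_monad M" and module: "fin_module M"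
begin

lemma kl_mapI: "(\<And>i. 1 \<le> i \<Longrightarrow> i \<le> m \<Longrightarrow> f i \<in> Rc M k) \<Longrightarrow> kl_map M m k f"
  unfolding kl_map_def by auto

lemma kl_mapD: "kl_map M m k f \<Longrightarrow> 1 \<le> i \<Longrightarrow> i \<le> m \<Longrightarrow> f i \<in> Rc M k"
  unfolding kl_map_def by auto

lemma kl_map_mono: "kl_map M m k f \<Longrightarrow> i \<le> m \<Longrightarrow> kl_map M i k f"
  unfolding kl_map_def by auto

lemma kl_map_cong: "kl_map M m k f \<Longrightarrow> (\<And>i. 1 \<le> i \<Longrightarrow> i \<le> m \<Longrightarrow> f i = g i) \<Longrightarrow> kl_map M m k g"
  unfolding kl_map_def by auto

lemma kl_map_0: "kl_map M 0 k \<sigma>"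
  unfolding kl_map_def by simp

lemma kl_map_tf: "(\<And>i. i < n \<Longrightarrow> f ! i \<in> Rc M k) \<Longrightarrow> kl_map M n k (tf f)"
  by (rule kl_mapI) (simp add: tf_def)

lemma eta_in_Rc: "1 \<le> i \<Longrightarrow> i \<le> m \<Longrightarrow> eta M m i \<in> Rc M m"
  using monad unfolding fin_monad_def by (elim conjE) simp

lemma kl_map_eta: "m \<le> k \<Longrightarrow> kl_map M m k (eta M k)"
  by (rule kl_mapI) (simp add: eta_in_Rc)

lemma bnd_in_Rc: "kl_map M m k f \<Longrightarrow> r \<in> Rc M m \<Longrightarrow> bnd M m k f r \<in> Rc M k"
  using monad unfolding fin_monad_def by (elim conjE) simp

lemma bnd_cong:
  assumes "kl_map M m k f" "\<And>i. 1 \<le> i \<Longrightarrow> i \<le> m \<Longrightarrow> f i = g i" "r \<in> Rc M m"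
  shows "bnd M m k f r = bnd M m k g r"
  using monad kl_map_cong[OF assms(1,2)] assms unfolding fin_monad_def by (elim conjE) simp

lemma bnd_eta: "kl_map M m k f \<Longrightarrow> 1 \<le> i \<Longrightarrow> i \<le> m \<Longrightarrow> bnd M m k f (eta M m i) = f i"
  using monad unfolding fin_monad_def by (elim conjE) simp

lemma bnd_eta_unit: "r \<in> Rc M m \<Longrightarrow> bnd M m m (eta M m) r = r"
  using monad unfolding fin_monad_def by (elim conjE) simp

lemma bnd_id:
  "(\<And>i. 1 \<le> i \<Longrightarrow> i \<le> m \<Longrightarrow> f i = eta M m i) \<Longrightarrow> r \<in> Rc M m \<Longrightarrow> bnd M m m f r = r"
  by (metis bnd_cong bnd_eta_unit kl_map_eta order_refl)

lemma bnd_assoc: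
  "kl_map M m k f \<Longrightarrow> kl_map M k l g \<Longrightarrow> r \<in> Rc M m \<Longrightarrow>
    bnd M m l (\<lambda>i. bnd M k l g (f i)) r = bnd M k l g (bnd M m k f r)"
  using monad unfolding fin_monad_def by (elim conjE) simp

lemma bnd_bnd:
  assumes f: "kl_map M m k f" and g: "kl_map M k l g" and r: "r \<in> Rc M m"
    and h: "\<And>i. 1 \<le> i \<Longrightarrow> i \<le> m \<Longrightarrow> bnd M k l g (f i) = h i"
  shows "bnd M k l g (bnd M m k f r) = bnd M m l h r"
proof -
  have "kl_map M m l (\<lambda>i. bnd M k l g (f i))"
    using f g by (auto intro!: kl_mapI bnd_in_Rc dest: kl_mapD)
  then show ?thesis
    using bnd_assoc[OF f g r] bnd_cong[OF _ h r] by simp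
qed

lemma rho_in_Lc: "kl_map M m k f \<Longrightarrow> E \<in> Lc M m \<Longrightarrow> rho M m k f E \<in> Lc M k"
  using module unfolding fin_module_def by (elim conjE) simp

lemma rho_cong:
  assumes "kl_map M m k f" "\<And>i. 1 \<le> i \<Longrightarrow> i \<le> m \<Longrightarrow> f i = g i" "E \<in> Lc M m"
  shows "rho M m k f E = rho M m k g E"
  using module kl_map_cong[OF assms(1,2)] assms unfolding fin_module_def by (elim conjE) simp

lemma rho_eta_unit: "E \<in> Lc M m \<Longrightarrow> rho M m m (eta M m) E = E"
  using module unfolding fin_module_def by (elim conjE) simp

lemma rho_id:
  "(\<And>i. 1 \<le> i \<Longrightarrow> i \<le> m \<Longrightarrow> f i = eta M m i) \<Longrightarrow> E \<in> Lc M m \<Longrightarrow> rho M m m f E = E"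
  by (metis rho_cong rho_eta_unit kl_map_eta order_refl)

lemma rho_assoc:
  "kl_map M m k f \<Longrightarrow> kl_map M k l g \<Longrightarrow> E \<in> Lc M m \<Longrightarrow>
    rho M k l g (rho M m k f E) = rho M m l (\<lambda>i. bnd M k l g (f i)) E"
  using module unfolding fin_module_def by (elim conjE) simp

lemma rho_rho:
  assumes f: "kl_map M m k f" and g: "kl_map M k l g" and E: "E \<in> Lc M m"
    and h: "\<And>i. 1 \<le> i \<Longrightarrow> i \<le> m \<Longrightarrow> bnd M k l g (f i) = h i"
  shows "rho M k l g (rho M m k f E) = rho M m l h E"
proof -
  have "kl_map M m l (\<lambda>i. bnd M k l g (f i))"
    using f g by (auto intro!: kl_mapI bnd_in_Rc dest: kl_mapD)
  then show ?thesis
    using rho_assoc[OF f g E] rho_cong[OF _ h E] by simp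
qed

lemma incl_in_Rc: "m \<le> k \<Longrightarrow> r \<in> Rc M m \<Longrightarrow> incl M m k r \<in> Rc M k"
  unfolding incl_def by (rule bnd_in_Rc[OF kl_map_eta])

lemma incl_id: "r \<in> Rc M m \<Longrightarrow> incl M m m r = r"
  unfolding incl_def by (rule bnd_id) simp_all

lemma incl_eta: "m \<le> k \<Longrightarrow> 1 \<le> i \<Longrightarrow> i \<le> m \<Longrightarrow> incl M m k (eta M m i) = eta M k i"
  unfolding incl_def by (rule bnd_eta[OF kl_map_eta])

lemma bnd_incl: "m \<le> k \<Longrightarrow> kl_map M k l g \<Longrightarrow> r \<in> Rc M m \<Longrightarrow> bnd M k l g (incl M m k r) = bnd M m l g r"
  unfolding incl_def by (rule bnd_bnd[OF kl_map_eta]) (simp_all add: bnd_eta)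

lemma incl_incl: "m \<le> k \<Longrightarrow> k \<le> l \<Longrightarrow> r \<in> Rc M m \<Longrightarrow> incl M k l (incl M m k r) = incl M m l r"
  by (simp add: bnd_incl[unfolded incl_def] incl_def kl_map_eta)

lemma bnd_eq_incl:
  "m \<le> k \<Longrightarrow> (\<And>i. 1 \<le> i \<Longrightarrow> i \<le> m \<Longrightarrow> f i = eta M k i) \<Longrightarrow> r \<in> Rc M m \<Longrightarrow>
    bnd M m k f r = incl M m k r"
  unfolding incl_def by (metis bnd_cong kl_map_eta)

lemma cc_hom_kl_map: "cc_hom M Y X f \<Longrightarrow> kl_map M (length X) (length Y) (tf f)"
  unfolding cc_hom_def by (auto intro!: kl_map_tf)

lemma cc_comp_cc_pl:
  assumes "length f = length X" "kl_map M (length X) m (tf f)"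
  shows "cc_comp M m f (cc_pl M X) = butlast f"
proof (rule nth_equalityI)
  fix i assume "i < length (cc_comp M m f (cc_pl M X))"
  then show "cc_comp M m f (cc_pl M X) ! i = butlast f ! i"
    using assms bnd_eta[OF assms(2), of "Suc i"] by (simp add: nth_butlast)
qed (use assms in simp)

lemma cc_pf_eq_butlast: "cc_hom M Y X f \<Longrightarrow> cc_pf M Y X f = butlast f"
  unfolding cc_pf_def by (rule cc_comp_cc_pl) (auto simp: cc_hom_def cc_hom_kl_map)

lemma tf_cc_id_snoc:
  "1 \<le> l \<Longrightarrow> l \<le> length Y \<Longrightarrow> tf (cc_id M Y @ [r]) l = eta M (length Y) l"
  by (auto simp: tf_def nth_append)

lemma kl_map_cc_id_snoc: "r \<in> Rc M (length Y) \<Longrightarrow> kl_map M (Suc (length Y)) (length Y) (tf (cc_id M Y @ [r]))"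
  by (rule kl_map_tf) (auto simp: nth_append less_Suc_eq intro: eta_in_Rc)

lemma cc_pb_cc_pf:
  assumes f: "cc_hom M Y X f" and ne: "X \<noteq> []"
  shows "cc_pb M (cc_pf M Y X f) Y X = Y @ [rho M (length X - 1) (length Y) (tf f) (last X)]"
proof -
  have "last X \<in> Lc M (length X - 1)"
    using f ne cc_obD[of M X "length X - 1"] by (simp add: cc_hom_def last_conv_nth)
  moreover have "kl_map M (length X - 1) (length Y) (tf (butlast f))"
    using f by (intro kl_map_tf) (auto simp: cc_hom_def nth_butlast)
  moreover have "length f = length X"
    using f by (simp add: cc_hom_def)
  ultimately show ?thesis
    unfolding cc_pf_eq_butlast[OF f] cc_pb_def by (simp add: rho_cong tf_butlast)
qed

lemma cc_comp_cc_ql_section: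
  assumes "\<forall>j<length g. g ! j \<in> Rc M (length Y)" "r \<in> Rc M (length Y)"
  shows "cc_comp M (length Y) (cc_id M Y @ [r]) (cc_ql M g Y) = g @ [r]"
proof (rule nth_equalityI)
  have s: "kl_map M (Suc (length Y)) (length Y) (tf (cc_id M Y @ [r]))"
    using kl_map_cc_id_snoc[OF assms(2)] .
  fix i assume "i < length (cc_comp M (length Y) (cc_id M Y @ [r]) (cc_ql M g Y))"
  then consider "i < length g" | "i = length g"
    by fastforce
  then show "cc_comp M (length Y) (cc_id M Y @ [r]) (cc_ql M g Y) ! i = (g @ [r]) ! i"
  proof cases
    case 1
    then show ?thesis
      using assms bnd_incl[OF _ s] bnd_id[OF tf_cc_id_snoc]
      by (simp add: cc_ql_def nth_append)
  next
    case 2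
    then show ?thesis
      using bnd_eta[OF s, of "Suc (length Y)"] by (simp add: cc_ql_def nth_append)
  qed
qed simp

lemma last_cc_comp_cc_ql:
  assumes "length s = Suc (length Y)" "kl_map M (Suc (length Y)) (length Y) (tf s)"
  shows "last (cc_comp M (length Y) s (cc_ql M g Y)) = last s"
  using assms bnd_eta[OF assms(2), of "Suc (length Y)"] last_eq_nth[OF assms(1)]
  by (simp add: cc_comp_def cc_ql_def)

lemma cc_sf_eq:
  assumes f: "cc_hom M Y X f" and ne: "X \<noteq> []"
  shows "cc_sf M Y X f = cc_id M Y @ [last f]"
proof -
  define Z where "Z = cc_pb M (cc_pf M Y X f) Y X"
  let ?P = "\<lambda>s. cc_hom M Y Z s \<and> cc_comp M (length Y) s (cc_pl M Z) = cc_id M Y \<and>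
      cc_comp M (length Y) s (cc_ql M (cc_pf M Y X f) Y) = f"
  have lZ: "length Z = Suc (length Y)"
    by (simp add: Z_def cc_pb_def)
  have fR: "\<forall>j<length f. f ! j \<in> Rc M (length Y)" and f_ne: "f \<noteq> []"
    using f ne by (auto simp: cc_hom_def)
  then have last_f: "last f \<in> Rc M (length Y)"
    by (simp add: last_conv_nth)
  have "?P (cc_id M Y @ [last f])"
  proof (intro conjI)
    have kf: "kl_map M (length X - 1) (length Y) (tf f)"
      using kl_map_mono[OF cc_hom_kl_map[OF f]] by simp
    have "last X \<in> Lc M (length X - 1)"
      using f ne cc_obD[of M X "length X - 1"] by (simp add: cc_hom_def last_conv_nth)
    then have "cc_ob M Z"
      using f cc_pb_cc_pf[OF f ne] rho_in_Lc[OF kf] by (simp add: Z_def cc_hom_def cc_ob_snoc)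
    then show "cc_hom M Y Z (cc_id M Y @ [last f])"
      using f last_f lZ by (auto simp: cc_hom_def nth_append less_Suc_eq intro: eta_in_Rc)
    show "cc_comp M (length Y) (cc_id M Y @ [last f]) (cc_pl M Z) = cc_id M Y"
      using cc_comp_cc_pl lZ kl_map_cc_id_snoc[OF last_f] by simp
    show "cc_comp M (length Y) (cc_id M Y @ [last f]) (cc_ql M (cc_pf M Y X f) Y) = f"
      using cc_comp_cc_ql_section[of "butlast f" Y "last f"] fR f_ne last_f
      by (simp add: cc_pf_eq_butlast[OF f] nth_butlast)
  qed
  moreover have "s = cc_id M Y @ [last f]" if "?P s" for s
  proof -
    have hs: "cc_hom M Y Z s" and p: "cc_comp M (length Y) s (cc_pl M Z) = cc_id M Y"
      and q: "cc_comp M (length Y) s (cc_ql M (cc_pf M Y X f) Y) = f"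
      using that by auto
    have ls: "length s = Suc (length Y)" and ks: "kl_map M (Suc (length Y)) (length Y) (tf s)"
      using hs cc_hom_kl_map[OF hs] lZ unfolding cc_hom_def by auto
    have "butlast s = cc_id M Y"
      using p cc_comp_cc_pl[of s Z] ls lZ ks by simp
    moreover have "last s = last f"
      using q last_cc_comp_cc_ql[OF ls ks, of "cc_pf M Y X f"] by simp
    ultimately show ?thesis
      using ls by (metis append_butlast_last_id list.size(3) nat.distinct(1))
  qed
  ultimately show ?thesis
    unfolding cc_sf_def Z_def[symmetric] by (rule the_equality)
qed

lemma mem_tilde_ob_iff:
  assumes hom: "\<And>G D f. (G, D, f) \<in> Mor \<Longrightarrow> cc_hom M G D f"
  shows "(X, r) \<in> tilde_ob M Mor \<longleftrightarrow> X \<noteq> [] \<and> (butlast X, X, cc_id M (butlast X) @ [r]) \<in> Mor"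
proof
  assume "(X, r) \<in> tilde_ob M Mor"
  then obtain s where ne: "X \<noteq> []" and s: "(butlast X, X, s) \<in> Mor" and r: "r = last s"
    and p: "cc_comp M (length X - 1) s (cc_pl M X) = cc_id M (butlast X)"
    unfolding tilde_ob_def by auto
  have hs: "cc_hom M (butlast X) X s"
    using hom[OF s] .
  then have "butlast s = cc_id M (butlast X)"
    using p cc_comp_cc_pl[of s X] cc_hom_kl_map[OF hs] by (simp add: cc_hom_def)
  moreover have "s \<noteq> []"
    using hs ne by (auto simp: cc_hom_def)
  ultimately have "s = cc_id M (butlast X) @ [r]"
    using r by (metis append_butlast_last_id)
  then show "X \<noteq> [] \<and> (butlast X, X, cc_id M (butlast X) @ [r]) \<in> Mor"
    using ne s by simp
next
  assume "X \<noteq> [] \<and> (butlast X, X, cc_id M (butlast X) @ [r]) \<in> Mor"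
  then have ne: "X \<noteq> []" and s: "(butlast X, X, cc_id M (butlast X) @ [r]) \<in> Mor"
    by auto
  have hs: "cc_hom M (butlast X) X (cc_id M (butlast X) @ [r])"
    using hom[OF s] .
  then have "cc_comp M (length X - 1) (cc_id M (butlast X) @ [r]) (cc_pl M X) = cc_id M (butlast X)"
    using cc_comp_cc_pl cc_hom_kl_map[OF hs] by (simp add: cc_hom_def)
  then show "(X, r) \<in> tilde_ob M Mor"
    unfolding tilde_ob_def using ne s by force
qed

end

text \<open>
  \<open>lift M \<sigma> a b k : [a + k] \<rightarrow> R([b + k])\<close> extends \<open>\<sigma> : [a] \<rightarrow> R([b])\<close> by renaming the
  remaining variables \<open>a + i \<mapsto> b + i\<close>; \<open>subst_tele\<close> applies it to a telescope over \<open>[a]\<close>,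
  whose \<open>j\<close>-th type lives over \<open>[a + j]\<close>.
\<close>

definition lift :: "('r, 'l) monmod \<Rightarrow> (nat \<Rightarrow> 'r) \<Rightarrow> nat \<Rightarrow> nat \<Rightarrow> nat \<Rightarrow> nat \<Rightarrow> 'r" where
  "lift M \<sigma> a b k i = (if i \<le> a then incl M b (b + k) (\<sigma> i) else eta M (b + k) (i - a + b))"

definition subst_tele :: "('r, 'l) monmod \<Rightarrow> (nat \<Rightarrow> 'r) \<Rightarrow> nat \<Rightarrow> nat \<Rightarrow> 'l list \<Rightarrow> 'l list" where
  "subst_tele M \<sigma> a b D = map (\<lambda>j. rho M (a + j) (b + j) (lift M \<sigma> a b j) (D ! j)) [0..<length D]"

lemma length_subst_tele [simp]: "length (subst_tele M \<sigma> a b D) = length D"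
  by (simp add: subst_tele_def)

lemma nth_subst_tele [simp]:
  "j < length D \<Longrightarrow> subst_tele M \<sigma> a b D ! j = rho M (a + j) (b + j) (lift M \<sigma> a b j) (D ! j)"
  by (simp add: subst_tele_def)

lemma subst_tele_Nil [simp]: "subst_tele M \<sigma> a b [] = []"
  by (simp add: subst_tele_def)

lemma subst_tele_snoc:
  "subst_tele M \<sigma> a b (D @ [E]) =
    subst_tele M \<sigma> a b D @ [rho M (a + length D) (b + length D) (lift M \<sigma> a b (length D)) E]"
  by (rule nth_equalityI) (auto simp: nth_append less_Suc_eq)

lemma subst_tele_Cons:
  "subst_tele M \<sigma> a b (E # D) = rho M a b (lift M \<sigma> a b 0) E #
    map (\<lambda>j. rho M (Suc (a + j)) (Suc (b + j)) (lift M \<sigma> a b (Suc j)) (D ! j)) [0..<length D]"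
  by (rule nth_equalityI) (auto simp: nth_Cons split: nat.split)

lemma length_wk_seq [simp]: "length (wk_seq M n D) = length D"
  by (simp add: wk_seq_def)

lemma nth_wk_seq [simp]: "j < length D \<Longrightarrow> wk_seq M n D ! j = wk_L M n (n + j) (D ! j)"
  by (simp add: wk_seq_def)

lemma wk_seq_Nil [simp]: "wk_seq M n [] = []"
  by (simp add: wk_seq_def)

lemma length_sb_seq [simp]: "length (sb_seq M n s D) = length D"
  by (simp add: sb_seq_def)

lemma nth_sb_seq [simp]: "j < length D \<Longrightarrow> sb_seq M n s D ! j = sb_L M n s (Suc n + j) (D ! j)"
  by (simp add: sb_seq_def)

context monad_module
begin

lemma kl_map_wk_map: "kl_map M m (Suc m) (wk_map M n m)"
  by (rule kl_mapI) (auto simp: wk_map_def intro!: eta_in_Rc)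

lemma bnd_wk_map_eta:
  "1 \<le> l \<Longrightarrow> l \<le> m \<Longrightarrow>
    bnd M m (Suc m) (wk_map M n m) (eta M m l) = eta M (Suc m) (if l \<le> n then l else Suc l)"
  using bnd_eta[OF kl_map_wk_map, of l m n] by (simp add: wk_map_def)

lemma kl_map_sb_map: "Suc n \<le> m \<Longrightarrow> s \<in> Rc M n \<Longrightarrow> kl_map M m (m - 1) (sb_map M n s m)"
  by (rule kl_mapI) (auto simp: sb_map_def intro!: eta_in_Rc incl_in_Rc)

lemma kl_map_lift: "kl_map M a b \<sigma> \<Longrightarrow> kl_map M (a + k) (b + k) (lift M \<sigma> a b k)"
  by (rule kl_mapI) (auto simp: lift_def intro!: incl_in_Rc eta_in_Rc dest: kl_mapD)

lemma lift_0: "kl_map M a b \<sigma> \<Longrightarrow> 1 \<le> l \<Longrightarrow> l \<le> a \<Longrightarrow> lift M \<sigma> a b 0 l = \<sigma> l"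
  by (simp add: lift_def incl_id kl_mapD)

lemma lift_Suc:
  "kl_map M a b \<sigma> \<Longrightarrow> 1 \<le> l \<Longrightarrow> l \<le> a + k \<Longrightarrow>
    incl M (b + k) (Suc (b + k)) (lift M \<sigma> a b k l) = lift M \<sigma> a b (Suc k) l"
  by (cases "l \<le> a") (simp_all add: lift_def incl_incl incl_eta kl_mapD)

lemma lift_0_0: "1 \<le> l \<Longrightarrow> l \<le> k \<Longrightarrow> lift M \<sigma> 0 0 k l = eta M k l"
  by (simp add: lift_def)

lemma wk_map_lift_0:
  "1 \<le> l \<Longrightarrow> l \<le> k \<Longrightarrow>
    bnd M (b + k) (Suc (b + k)) (wk_map M b (b + k)) (lift M \<sigma> 0 b k l) = lift M \<sigma> 0 (Suc b) k l"
  using bnd_eta[OF kl_map_wk_map, of "l + b" "b + k" b] by (simp add: lift_def wk_map_def)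

lemma wk_L_lift_0:
  "E \<in> Lc M k \<Longrightarrow>
    wk_L M b (b + k) (rho M k (b + k) (lift M \<sigma> 0 b k) E) = rho M k (Suc (b + k)) (lift M \<sigma> 0 (Suc b) k) E"
  unfolding wk_L_def using kl_map_lift[OF kl_map_0[of b \<sigma>], of k]
  by (intro rho_rho kl_map_wk_map) (auto intro: kl_mapI simp: wk_map_lift_0)

lemma wk_R_lift_0:
  "r \<in> Rc M k \<Longrightarrow>
    wk_R M b (b + k) (bnd M k (b + k) (lift M \<sigma> 0 b k) r) = bnd M k (Suc (b + k)) (lift M \<sigma> 0 (Suc b) k) r"
  unfolding wk_R_def using kl_map_lift[OF kl_map_0[of b \<sigma>], of k]
  by (intro bnd_bnd kl_map_wk_map) (auto intro: kl_mapI simp: wk_map_lift_0)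

lemma tf_cc_ql:
  "1 \<le> l \<Longrightarrow> l \<le> length f \<Longrightarrow> tf (cc_ql M f Y) l = incl M (length Y) (Suc (length Y)) (tf f l)"
  by (auto simp: tf_def cc_ql_def nth_append)

lemma wk_R_end: "r \<in> Rc M m \<Longrightarrow> wk_R M m m r = incl M m (Suc m) r"
  unfolding wk_R_def by (rule bnd_eq_incl) (simp_all add: wk_map_def)

lemma wk_L_rho_cc_ql:
  assumes E: "E \<in> Lc M i" and i: "i \<le> length f" and f: "kl_map M (length f) (length Y) (tf f)"
  shows "wk_L M (length Y) (length Y) (rho M i (length Y) (tf f) E) = rho M i (Suc (length Y)) (tf (cc_ql M f Y)) E"
  unfolding wk_L_def
proof (rule rho_rho[OF kl_map_mono[OF f i] kl_map_wk_map E])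
  fix l assume l: "1 \<le> l" "l \<le> i"
  then show "bnd M (length Y) (Suc (length Y)) (wk_map M (length Y) (length Y)) (tf f l) = tf (cc_ql M f Y) l"
    using i wk_R_end[of "tf f l" "length Y"] kl_mapD[OF f, of l] by (simp add: wk_R_def tf_cc_ql)
qed

lemma lift_eq_wk_map:
  "(\<And>l. 1 \<le> l \<Longrightarrow> l \<le> n \<Longrightarrow> \<sigma> l = eta M (Suc n) l) \<Longrightarrow> 1 \<le> l \<Longrightarrow> l \<le> n + j \<Longrightarrow>
    lift M \<sigma> n (Suc n) j l = wk_map M n (n + j) l"
  by (simp add: lift_def wk_map_def incl_eta)

lemma lift_eq_sb_map:
  "(\<And>l. 1 \<le> l \<Longrightarrow> l \<le> n \<Longrightarrow> \<sigma> l = eta M n l) \<Longrightarrow> 1 \<le> l \<Longrightarrow> l \<le> Suc (n + j) \<Longrightarrow>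
    lift M \<sigma> (Suc n) n j l = sb_map M n (\<sigma> (Suc n)) (Suc (n + j)) l"
  by (auto simp: lift_def sb_map_def incl_eta)

lemma sb_map_lift:
  assumes \<sigma>: "kl_map M (Suc i) m \<sigma>" and l: "1 \<le> l" "l \<le> i + Suc j"
  shows "bnd M (Suc (m + j)) (m + j) (sb_map M m (\<sigma> (Suc i)) (Suc (m + j))) (lift M \<sigma> i m (Suc j) l)
       = lift M \<sigma> (Suc i) m j l"
proof -
  have s: "\<sigma> (Suc i) \<in> Rc M m"
    using \<sigma> kl_mapD by auto
  have sb: "kl_map M (Suc (m + j)) (m + j) (sb_map M m (\<sigma> (Suc i)) (Suc (m + j)))"
    using kl_map_sb_map[OF _ s, of "Suc (m + j)"] by simp
  consider "l \<le> i" | "l = Suc i" | "l > Suc i" by linarith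
  then show ?thesis
  proof cases
    case 1
    have \<sigma>l: "\<sigma> l \<in> Rc M m"
      using \<sigma> l 1 kl_mapD by auto
    have "bnd M (Suc (m + j)) (m + j) (sb_map M m (\<sigma> (Suc i)) (Suc (m + j))) (incl M m (m + Suc j) (\<sigma> l))
       = bnd M m (m + j) (sb_map M m (\<sigma> (Suc i)) (Suc (m + j))) (\<sigma> l)"
      using bnd_incl[OF _ sb \<sigma>l] by simp
    also have "\<dots> = incl M m (m + j) (\<sigma> l)"
      using \<sigma>l by (intro bnd_eq_incl) (simp_all add: sb_map_def)
    finally show ?thesis
      using 1 by (simp add: lift_def)
  next
    case 2
    then show ?thesis
      using sb by (simp add: lift_def bnd_eta sb_map_def)
  next
    case 3
    then have "l + m - i \<noteq> Suc m" "\<not> l + m - i \<le> m"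
      by auto
    then show ?thesis
      using sb l 3 by (simp add: lift_def bnd_eta sb_map_def)
  qed
qed

lemma sb_L_lift:
  assumes "kl_map M (Suc i) m \<sigma>" "E \<in> Lc M (Suc (i + j))"
  shows "sb_L M m (\<sigma> (Suc i)) (Suc (m + j)) (rho M (Suc (i + j)) (Suc (m + j)) (lift M \<sigma> i m (Suc j)) E)
       = rho M (Suc (i + j)) (m + j) (lift M \<sigma> (Suc i) m j) E"
  unfolding sb_L_def
  using assms kl_map_lift[OF kl_map_mono[OF assms(1)], of i "Suc j"]
    kl_map_sb_map[of m "Suc (m + j)" "\<sigma> (Suc i)"] kl_mapD[OF assms(1), of "Suc i"]
  by (auto intro!: rho_rho simp: sb_map_lift)

lemma sb_R_lift:
  assumes "kl_map M (Suc i) m \<sigma>" "r \<in> Rc M (Suc (i + j))"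
  shows "sb_R M m (\<sigma> (Suc i)) (Suc (m + j)) (bnd M (Suc (i + j)) (Suc (m + j)) (lift M \<sigma> i m (Suc j)) r)
       = bnd M (Suc (i + j)) (m + j) (lift M \<sigma> (Suc i) m j) r"
  unfolding sb_R_def
  using assms kl_map_lift[OF kl_map_mono[OF assms(1)], of i "Suc j"]
    kl_map_sb_map[of m "Suc (m + j)" "\<sigma> (Suc i)"] kl_mapD[OF assms(1), of "Suc i"]
  by (auto intro!: bnd_bnd simp: sb_map_lift)

end

definition typed_mor ::
  "('r, 'l) monmod \<Rightarrow> 'l list set \<Rightarrow> ('l list \<times> 'r) set \<Rightarrow> 'l list \<Rightarrow> 'l list \<Rightarrow> 'r list \<Rightarrow> bool" where
  "typed_mor M C Ct Y X f \<longleftrightarrow> Y \<in> C \<and> X \<in> C \<and> length f = length X \<and>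
     (\<forall>i<length X. (Y @ [rho M i (length Y) (tf f) (X ! i)], f ! i) \<in> Ct)"

locale cc_conditions = monad_module M for M :: "('r, 'l) monmod" +
  fixes C :: "'l list set" and Ct :: "('l list \<times> 'r) set"
  assumes ob_wf: "\<And>G. G \<in> C \<Longrightarrow> cc_ob M G"
    and term_wf: "\<And>X r. (X, r) \<in> Ct \<Longrightarrow> X \<noteq> [] \<and> cc_ob M X \<and> r \<in> Rc M (length X - 1)"
    and ob_Nil: "[] \<in> C"
    and ob_butlast: "\<And>G T. G @ [T] \<in> C \<Longrightarrow> G \<in> C"
    and ob_term: "\<And>G R r. (G @ [R], r) \<in> Ct \<Longrightarrow> G @ [R] \<in> C"
    and term_wk: "\<And>G T D R r. G @ [T] \<in> C \<Longrightarrow> (G @ D @ [R], r) \<in> Ct \<Longrightarrow>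
        (G @ [T] @ wk_seq M (length G) D @ [wk_L M (length G) (length G + length D) R],
         wk_R M (length G) (length G + length D) r) \<in> Ct"
    and term_sb: "\<And>G S s D R r. (G @ [S], s) \<in> Ct \<Longrightarrow> (G @ [S] @ D @ [R], r) \<in> Ct \<Longrightarrow>
        (G @ sb_seq M (length G) s D @ [sb_L M (length G) s (Suc (length G) + length D) R],
         sb_R M (length G) s (Suc (length G) + length D) r) \<in> Ct"
    and term_var: "\<And>G T. G @ [T] \<in> C \<Longrightarrow>
        (G @ [T, wk_L M (length G) (length G) T], eta M (Suc (length G)) (Suc (length G))) \<in> Ct"
begin

abbreviation "mor \<equiv> typed_mor M C Ct"

lemma term_snocD:
  assumes "(G @ [R], r) \<in> Ct"
  shows "cc_ob M G" "R \<in> Lc M (length G)" "r \<in> Rc M (length G)"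
  using term_wf[OF assms] by (simp_all add: cc_ob_snoc)

lemma ob_take: "G \<in> C \<Longrightarrow> take k G \<in> C"
proof (induction G rule: rev_induct)
  case (snoc T G)
  then show ?case
    using ob_butlast by (cases "k \<le> length G") auto
qed simp

lemma term_var_take:
  assumes G: "G \<in> C" and k: "Suc i \<le> k" "k \<le> length G"
  shows "(take k G @ [rho M i k (eta M k) (G ! i)], eta M k (Suc i)) \<in> Ct"
proof -
  have Gi: "G ! i \<in> Lc M i"
    using ob_wf[OF G] k by (intro cc_obD) simp_all
  show ?thesis
    using k
  proof (induction k rule: dec_induct)
    case base
    have G_Suc_i: "take (Suc i) G = take i G @ [G ! i]"
      using base by (simp add: take_Suc_conv_app_nth)
    then have "(take i G @ [G ! i, wk_L M i i (G ! i)], eta M (Suc i) (Suc i)) \<in> Ct"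
      using term_var[of "take i G" "G ! i"] ob_take[OF G, of "Suc i"] base by simp
    moreover have "wk_L M i i (G ! i) = rho M i (Suc i) (eta M (Suc i)) (G ! i)"
      unfolding wk_L_def by (rule rho_cong[OF kl_map_wk_map _ Gi]) (simp add: wk_map_def)
    ultimately show ?case
      using G_Suc_i by simp
  next
    case (step k)
    have G_Suc_k: "take (Suc k) G = take k G @ [G ! k]"
      using step.prems by (simp add: take_Suc_conv_app_nth)
    have "(take k G @ [G ! k] @ [] @ [wk_L M k k (rho M i k (eta M k) (G ! i))],
        wk_R M k k (eta M k (Suc i))) \<in> Ct"
      using term_wk[of "take k G" "G ! k" "[]"] ob_take[OF G, of "Suc k"] step G_Suc_k by simp
    moreover have "wk_L M k k (rho M i k (eta M k) (G ! i)) = rho M i (Suc k) (eta M (Suc k)) (G ! i)"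
      unfolding wk_L_def using step.hyps Gi
      by (intro rho_rho kl_map_eta kl_map_wk_map) (simp_all add: bnd_wk_map_eta)
    moreover have "wk_R M k k (eta M k (Suc i)) = eta M (Suc k) (Suc i)"
      unfolding wk_R_def using step.hyps by (simp add: bnd_wk_map_eta)
    ultimately show ?case
      using G_Suc_k by simp
  qed
qed

lemma term_var_nth:
  assumes G: "G \<in> C" and i: "i < length G"
    and f: "\<And>l. 1 \<le> l \<Longrightarrow> l \<le> i \<Longrightarrow> f l = eta M (length G) l"
  shows "(G @ [rho M i (length G) f (G ! i)], eta M (length G) (Suc i)) \<in> Ct"
proof -
  have Gi: "G ! i \<in> Lc M i"
    using ob_wf[OF G] i by (rule cc_obD)
  from term_var_take[OF G, of i "length G"] i
  have "(G @ [rho M i (length G) (eta M (length G)) (G ! i)], eta M (length G) (Suc i)) \<in> Ct"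
    by simp
  moreover have "rho M i (length G) f (G ! i) = rho M i (length G) (eta M (length G)) (G ! i)"
    using i f Gi by (intro rho_cong kl_mapI) (simp_all add: eta_in_Rc)
  ultimately show ?thesis
    by simp
qed

text \<open>Here \<open>\<sigma>\<close> is irrelevant (\<open>a = 0\<close>); it is kept so that the lemma is literally the
  \<open>0\<close>-th step of \<open>term_subst_prefix\<close>.\<close>

lemma term_weaken_by:
  assumes Y: "Y \<in> C" and J: "(\<Theta> @ [R], r) \<in> Ct"
  shows "(Y @ subst_tele M \<sigma> 0 (length Y) \<Theta> @
            [rho M (length \<Theta>) (length Y + length \<Theta>) (lift M \<sigma> 0 (length Y) (length \<Theta>)) R],
          bnd M (length \<Theta>) (length Y + length \<Theta>) (lift M \<sigma> 0 (length Y) (length \<Theta>)) r) \<in> Ct"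
  using Y
proof (induction Y rule: rev_induct)
  have \<Theta>: "\<And>j. j < length \<Theta> \<Longrightarrow> \<Theta> ! j \<in> Lc M j" and R: "R \<in> Lc M (length \<Theta>)"
    and r: "r \<in> Rc M (length \<Theta>)"
    using term_snocD[OF J] cc_obD by auto
  {
    case Nil
    have "subst_tele M \<sigma> 0 0 \<Theta> = \<Theta>"
      by (rule nth_equalityI) (simp_all add: rho_id lift_0_0 \<Theta>)
    then show ?case
      using J R r by (simp add: rho_id bnd_id lift_0_0)
  next
    case (snoc T Y)
    have "wk_seq M (length Y) (subst_tele M \<sigma> 0 (length Y) \<Theta>) = subst_tele M \<sigma> 0 (Suc (length Y)) \<Theta>"
      by (rule nth_equalityI) (simp_all add: wk_L_lift_0 \<Theta>)
    then show ?case
      using term_wk[OF snoc.prems snoc.IH[OF ob_butlast[OF snoc.prems]]] R r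
      by (simp add: wk_L_lift_0 wk_R_lift_0)
  }
qed

lemma term_subst_step:
  assumes Y: "length Y = m" and \<sigma>: "kl_map M (Suc i) m \<sigma>" and i: "i < length \<Theta>"
    and S: "(Y @ [rho M i m \<sigma> (\<Theta> ! i)], \<sigma> (Suc i)) \<in> Ct"
    and J: "(\<Theta> @ [R], r) \<in> Ct"
    and IH: "(Y @ subst_tele M \<sigma> i m (drop i \<Theta>) @
              [rho M (length \<Theta>) (m + (length \<Theta> - i)) (lift M \<sigma> i m (length \<Theta> - i)) R],
            bnd M (length \<Theta>) (m + (length \<Theta> - i)) (lift M \<sigma> i m (length \<Theta> - i)) r) \<in> Ct"
  shows "(Y @ subst_tele M \<sigma> (Suc i) m (drop (Suc i) \<Theta>) @
            [rho M (length \<Theta>) (m + (length \<Theta> - Suc i)) (lift M \<sigma> (Suc i) m (length \<Theta> - Suc i)) R],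
          bnd M (length \<Theta>) (m + (length \<Theta> - Suc i)) (lift M \<sigma> (Suc i) m (length \<Theta> - Suc i)) r) \<in> Ct"
proof -
  obtain j where j: "length \<Theta> = Suc (i + j)"
    using i by (metis add_Suc less_iff_Suc_add)
  have \<Theta>: "\<And>j. j < length \<Theta> \<Longrightarrow> \<Theta> ! j \<in> Lc M j" and R: "R \<in> Lc M (length \<Theta>)"
    and r: "r \<in> Rc M (length \<Theta>)"
    using term_snocD[OF J] cc_obD by auto
  have \<sigma>i: "kl_map M i m \<sigma>"
    using kl_map_mono[OF \<sigma>] by simp
  define D where
    "D = map (\<lambda>k. rho M (Suc (i + k)) (Suc (m + k)) (lift M \<sigma> i m (Suc k)) (\<Theta> ! Suc (i + k))) [0..<j]"
  have "rho M i m (lift M \<sigma> i m 0) (\<Theta> ! i) = rho M i m \<sigma> (\<Theta> ! i)"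
    using \<Theta> i kl_map_lift[OF \<sigma>i, of 0] by (intro rho_cong) (simp_all add: lift_0[OF \<sigma>i])
  then have "subst_tele M \<sigma> i m (drop i \<Theta>) = [rho M i m \<sigma> (\<Theta> ! i)] @ D"
    using i j by (simp add: Cons_nth_drop_Suc[symmetric] subst_tele_Cons D_def)
  then have "(Y @ sb_seq M m (\<sigma> (Suc i)) D @
        [sb_L M m (\<sigma> (Suc i)) (Suc (m + j)) (rho M (Suc (i + j)) (Suc (m + j)) (lift M \<sigma> i m (Suc j)) R)],
      sb_R M m (\<sigma> (Suc i)) (Suc (m + j)) (bnd M (Suc (i + j)) (Suc (m + j)) (lift M \<sigma> i m (Suc j)) r)) \<in> Ct"
    using term_sb[OF S, of D] IH Y j by (simp add: D_def)
  moreover have "sb_seq M m (\<sigma> (Suc i)) D = subst_tele M \<sigma> (Suc i) m (drop (Suc i) \<Theta>)"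
    by (rule nth_equalityI) (use j \<Theta> in \<open>simp_all add: D_def sb_L_lift[OF \<sigma>]\<close>)
  ultimately show ?thesis
    using j R r by (simp add: sb_L_lift[OF \<sigma>] sb_R_lift[OF \<sigma>])
qed

lemma term_subst_prefix:
  assumes Y: "Y \<in> C" "length Y = m" and \<sigma>: "kl_map M n m \<sigma>" and n: "n \<le> length \<Theta>"
    and H: "\<And>i. i < n \<Longrightarrow> (Y @ [rho M i m \<sigma> (\<Theta> ! i)], \<sigma> (Suc i)) \<in> Ct"
    and J: "(\<Theta> @ [R], r) \<in> Ct"
  shows "(Y @ subst_tele M \<sigma> n m (drop n \<Theta>) @
            [rho M (length \<Theta>) (m + (length \<Theta> - n)) (lift M \<sigma> n m (length \<Theta> - n)) R],
          bnd M (length \<Theta>) (m + (length \<Theta> - n)) (lift M \<sigma> n m (length \<Theta> - n)) r) \<in> Ct"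
proof -
  have "(Y @ subst_tele M \<sigma> i m (drop i \<Theta>) @
            [rho M (length \<Theta>) (m + (length \<Theta> - i)) (lift M \<sigma> i m (length \<Theta> - i)) R],
          bnd M (length \<Theta>) (m + (length \<Theta> - i)) (lift M \<sigma> i m (length \<Theta> - i)) r) \<in> Ct"
    if "i \<le> n" for i
    using that
  proof (induction i)
    case 0
    then show ?case
      using term_weaken_by[OF Y(1) J, of \<sigma>] Y(2) by simp
  next
    case (Suc i)
    then show ?case
      using term_subst_step[OF Y(2) kl_map_mono[OF \<sigma> Suc.prems] _ H J] n by simp
  qed
  then show ?thesis
    by simp
qed

lemma typed_mor_kl_map: "mor Y X f \<Longrightarrow> kl_map M (length X) (length Y) (tf f)"
  unfolding typed_mor_def by (intro kl_map_tf) (metis term_snocD(3))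

lemma typed_mor_cc_hom: "mor Y X f \<Longrightarrow> cc_hom M Y X f"
  unfolding typed_mor_def cc_hom_def using ob_wf term_snocD(3) by metis

lemma term_subst_mor:
  assumes f: "mor Y \<Gamma> f" and J: "(\<Gamma> @ [R], r) \<in> Ct"
  shows "(Y @ [rho M (length \<Gamma>) (length Y) (tf f) R], bnd M (length \<Gamma>) (length Y) (tf f) r) \<in> Ct"
proof -
  have f': "kl_map M (length \<Gamma>) (length Y) (tf f)"
    using typed_mor_kl_map[OF f] .
  have "(Y @ [rho M (length \<Gamma>) (length Y) (lift M (tf f) (length \<Gamma>) (length Y) 0) R],
      bnd M (length \<Gamma>) (length Y) (lift M (tf f) (length \<Gamma>) (length Y) 0) r) \<in> Ct"
    using term_subst_prefix[OF _ refl f' order_refl _ J] f unfolding typed_mor_def by simp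
  moreover have "rho M (length \<Gamma>) (length Y) (lift M (tf f) (length \<Gamma>) (length Y) 0) R
      = rho M (length \<Gamma>) (length Y) (tf f) R"
    using term_snocD(2)[OF J] kl_map_lift[OF f', of 0] by (intro rho_cong) (simp_all add: lift_0[OF f'])
  moreover have "bnd M (length \<Gamma>) (length Y) (lift M (tf f) (length \<Gamma>) (length Y) 0) r
      = bnd M (length \<Gamma>) (length Y) (tf f) r"
    using term_snocD(3)[OF J] kl_map_lift[OF f', of 0] by (intro bnd_cong) (simp_all add: lift_0[OF f'])
  ultimately show ?thesis
    by simp
qed

lemma ob_subst_mor:
  assumes f: "mor Y \<Gamma> f" and J: "(\<Gamma> @ [A, R], r) \<in> Ct"
  shows "Y @ [rho M (length \<Gamma>) (length Y) (tf f) A] \<in> C"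
proof -
  have f': "kl_map M (length \<Gamma>) (length Y) (tf f)"
    using typed_mor_kl_map[OF f] .
  have "((Y @ [rho M (length \<Gamma>) (length Y) (lift M (tf f) (length \<Gamma>) (length Y) 0) A]) @
      [rho M (Suc (length \<Gamma>)) (Suc (length Y)) (lift M (tf f) (length \<Gamma>) (length Y) 1) R],
      bnd M (Suc (length \<Gamma>)) (Suc (length Y)) (lift M (tf f) (length \<Gamma>) (length Y) 1) r) \<in> Ct"
    using term_subst_prefix[of Y _ "length \<Gamma>" _ "\<Gamma> @ [A]", OF _ refl f' _ _ ] J f
    unfolding typed_mor_def by (simp add: nth_append subst_tele_def)
  then have "Y @ [rho M (length \<Gamma>) (length Y) (lift M (tf f) (length \<Gamma>) (length Y) 0) A] \<in> C"
    by (metis ob_butlast ob_term)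
  moreover have "rho M (length \<Gamma>) (length Y) (lift M (tf f) (length \<Gamma>) (length Y) 0) A
      = rho M (length \<Gamma>) (length Y) (tf f) A"
    using term_snocD(1)[of "\<Gamma> @ [A]"] J kl_map_lift[OF f', of 0]
    by (intro rho_cong) (simp_all add: lift_0[OF f'] cc_ob_snoc)
  ultimately show ?thesis
    by simp
qed

lemma typed_mor_cc_id_snoc: "mor Y (Y @ [R]) (cc_id M Y @ [r]) \<longleftrightarrow> (Y @ [R], r) \<in> Ct"
proof
  assume f: "mor Y (Y @ [R]) (cc_id M Y @ [r])"
  then have "(Y @ [rho M (length Y) (length Y) (tf (cc_id M Y @ [r])) R], r) \<in> Ct"
    unfolding typed_mor_def by (auto dest!: spec[of _ "length Y"])
  moreover have "R \<in> Lc M (length Y)"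
    using f ob_wf[of "Y @ [R]"] unfolding typed_mor_def by (simp add: cc_ob_snoc)
  ultimately show "(Y @ [R], r) \<in> Ct"
    by (simp add: rho_id tf_cc_id_snoc)
next
  assume J: "(Y @ [R], r) \<in> Ct"
  then have YR: "Y @ [R] \<in> C" and Y: "Y \<in> C"
    using ob_term ob_butlast by blast+
  have "(Y @ [rho M i (length Y) (tf (cc_id M Y @ [r])) ((Y @ [R]) ! i)], (cc_id M Y @ [r]) ! i) \<in> Ct"
    if "i < Suc (length Y)" for i
  proof (cases "i < length Y")
    case True
    then show ?thesis
      using term_var_nth[OF Y True, of "tf (cc_id M Y @ [r])"] by (simp add: tf_cc_id_snoc nth_append)
  next
    case False
    then have "i = length Y"
      using that by simp
    then show ?thesis
      using J term_snocD(2)[OF J] by (simp add: rho_id tf_cc_id_snoc)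
  qed
  then show "mor Y (Y @ [R]) (cc_id M Y @ [r])"
    unfolding typed_mor_def using Y YR by simp
qed

lemma typed_mor_id: "G \<in> C \<Longrightarrow> mor G G (cc_id M G)"
  unfolding typed_mor_def by (auto intro!: term_var_nth simp: tf_def)

lemma typed_mor_comp:
  assumes f: "mor G D f" and g: "mor D T g"
  shows "mor G T (cc_comp M (length G) f g)"
  unfolding typed_mor_def
proof (intro conjI allI impI)
  show "G \<in> C" "T \<in> C" "length (cc_comp M (length G) f g) = length T"
    using f g unfolding typed_mor_def by auto
  have kf: "kl_map M (length D) (length G) (tf f)" and kg: "kl_map M (length T) (length D) (tf g)"
    using f g by (simp_all add: typed_mor_kl_map)
  fix i assume i: "i < length T"
  have "(G @ [rho M (length D) (length G) (tf f) (rho M i (length D) (tf g) (T ! i))],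
      bnd M (length D) (length G) (tf f) (g ! i)) \<in> Ct"
    using term_subst_mor[OF f] g i unfolding typed_mor_def by simp
  moreover have "rho M (length D) (length G) (tf f) (rho M i (length D) (tf g) (T ! i))
      = rho M i (length G) (tf (cc_comp M (length G) f g)) (T ! i)"
    using i g f ob_wf cc_obD unfolding typed_mor_def
    by (intro rho_rho[OF kl_map_mono[OF kg] kf]) (auto simp: tf_def)
  ultimately show "(G @ [rho M i (length G) (tf (cc_comp M (length G) f g)) (T ! i)],
      cc_comp M (length G) f g ! i) \<in> Ct"
    using f g i unfolding typed_mor_def by simp
qed

lemma typed_mor_cc_pl:
  assumes X: "X \<in> C" and ne: "X \<noteq> []"
  shows "mor X (butlast X) (cc_pl M X)"
  unfolding typed_mor_def
proof (intro conjI allI impI)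
  show "X \<in> C" "butlast X \<in> C" "length (cc_pl M X) = length (butlast X)"
    using X ne ob_butlast[of "butlast X" "last X"] by simp_all
  fix i assume "i < length (butlast X)"
  then show "(X @ [rho M i (length X) (tf (cc_pl M X)) (butlast X ! i)], cc_pl M X ! i) \<in> Ct"
    using term_var_nth[OF X, of i "tf (cc_pl M X)"] by (simp add: nth_butlast tf_def)
qed

lemma typed_mor_cc_q:
  assumes X: "X \<in> C" and ne: "X \<noteq> []" and f: "mor Y (butlast X) f"
  shows "cc_pb M f Y X \<in> C \<and> mor (cc_pb M f Y X) X (cc_ql M f Y)"
proof -
  define n where "n = length X - 1"
  define m where "m = length Y"
  define T where "T = rho M n m (tf f) (last X)"
  have X_eq: "X = butlast X @ [last X]"
    using ne by simp
  have Y: "Y \<in> C" and lf: "length f = n" and kf: "kl_map M n m (tf f)"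
    using f typed_mor_kl_map[OF f] unfolding typed_mor_def n_def m_def by auto
  have obX: "cc_ob M X"
    using ob_wf[OF X] .
  have pb: "cc_pb M f Y X = Y @ [T]"
    by (simp add: cc_pb_def T_def n_def m_def)
  have YT: "Y @ [T] \<in> C"
    using ob_subst_mor[OF f] term_var[of "butlast X" "last X"] X X_eq by (simp add: T_def n_def m_def)
  have "mor (Y @ [T]) X (cc_ql M f Y)"
    unfolding typed_mor_def
  proof (intro conjI allI impI)
    show "Y @ [T] \<in> C" "X \<in> C" "length (cc_ql M f Y) = length X"
      using YT X ne lf n_def by auto
    fix i assume i: "i < length X"
    have Xi: "X ! i \<in> Lc M i"
      using cc_obD[OF obX i] .
    show "((Y @ [T]) @ [rho M i (length (Y @ [T])) (tf (cc_ql M f Y)) (X ! i)], cc_ql M f Y ! i) \<in> Ct"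
    proof (cases "i < n")
      case True
      have "(Y @ [] @ [rho M i m (tf f) (X ! i)], f ! i) \<in> Ct"
        using f True lf unfolding typed_mor_def m_def n_def by (auto simp: nth_butlast)
      then have "(Y @ [T] @ [] @ [wk_L M m m (rho M i m (tf f) (X ! i))], wk_R M m m (f ! i)) \<in> Ct"
        using term_wk[OF YT, of "[]"] m_def by simp
      moreover have "wk_R M m m (f ! i) = cc_ql M f Y ! i"
        using wk_R_end kl_mapD[OF kf, of "Suc i"] True lf by (simp add: cc_ql_def nth_append m_def)
      ultimately show ?thesis
        using wk_L_rho_cc_ql[OF Xi] kf True lf by (simp add: m_def)
    next
      case False
      then have i_eq: "i = n" and "X ! n = last X"
        using i ne by (simp_all add: n_def last_conv_nth)
      moreover have "(Y @ [T, wk_L M m m T], eta M (Suc m) (Suc m)) \<in> Ct"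
        using term_var[OF YT] m_def by simp
      ultimately show ?thesis
        using wk_L_rho_cc_ql[OF Xi] kf lf by (simp add: T_def m_def cc_ql_def nth_append)
    qed
  qed
  then show ?thesis
    using pb YT by simp
qed

lemma typed_mor_cc_sf:
  assumes f: "mor Y X f" and ne: "X \<noteq> []"
  shows "mor Y (cc_pb M (cc_pf M Y X f) Y X) (cc_sf M Y X f)"
proof -
  have hf: "cc_hom M Y X f"
    using typed_mor_cc_hom[OF f] .
  have "(Y @ [rho M (length X - 1) (length Y) (tf f) (last X)], last f) \<in> Ct"
    using f ne spec[of _ "length X - 1"] unfolding typed_mor_def
    by (metis diff_less last_conv_nth length_0_conv length_greater_0_conv zero_less_one)
  then show ?thesis
    unfolding cc_sf_eq[OF hf ne] cc_pb_cc_pf[OF hf ne] by (simp add: typed_mor_cc_id_snoc)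
qed

lemma cc_subsystem_typed_mor: "cc_subsystem M C {(Y, X, f). mor Y X f}"
  unfolding cc_subsystem_def
  using typed_mor_cc_hom typed_mor_id typed_mor_comp ob_Nil typed_mor_cc_pl typed_mor_cc_q typed_mor_cc_sf
    ob_wf ob_butlast[of "butlast X" "last X" for X]
  by (auto simp: cc_p_def cc_q_def typed_mor_def)

lemma tilde_ob_typed_mor: "tilde_ob M {(Y, X, f). mor Y X f} = Ct"
proof -
  have "(X, r) \<in> tilde_ob M {(Y, X, f). mor Y X f} \<longleftrightarrow> (X, r) \<in> Ct" for X r
  proof -
    have "X \<noteq> [] \<and> mor (butlast X) X (cc_id M (butlast X) @ [r]) \<longleftrightarrow> (X, r) \<in> Ct"
      using typed_mor_cc_id_snoc[of "butlast X" "last X" r] term_wf[of X r] by (cases X rule: rev_cases) auto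
    then show ?thesis
      using mem_tilde_ob_iff[of "{(Y, X, f). mor Y X f}"] typed_mor_cc_hom by auto
  qed
  then show ?thesis
    by auto
qed

end

locale cc_subsystem_of = monad_module M for M :: "('r, 'l) monmod" +
  fixes C :: "'l list set" and Mor :: "('l list \<times> 'l list \<times> 'r list) set"
  assumes subsystem: "cc_subsystem M C Mor"
begin

lemma mor_D: "(G, D, f) \<in> Mor \<Longrightarrow> cc_hom M G D f \<and> G \<in> C \<and> D \<in> C"
  using subsystem unfolding cc_subsystem_def by fast

lemma ob_wf: "G \<in> C \<Longrightarrow> cc_ob M G"
  using subsystem unfolding cc_subsystem_def by fast

lemma ob_id: "G \<in> C \<Longrightarrow> (G, G, cc_id M G) \<in> Mor"
  using subsystem unfolding cc_subsystem_def by fast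

lemma mor_comp: "(G, D, f) \<in> Mor \<Longrightarrow> (D, T, g) \<in> Mor \<Longrightarrow> (G, T, cc_comp M (length G) f g) \<in> Mor"
  using subsystem unfolding cc_subsystem_def by fast

lemma ob_Nil: "[] \<in> C"
  using subsystem unfolding cc_subsystem_def by fast

lemma ob_ft: "X \<in> C \<Longrightarrow> X \<noteq> [] \<Longrightarrow> butlast X \<in> C \<and> cc_p M X \<in> Mor"
  using subsystem unfolding cc_subsystem_def by fast

lemma ob_pb: "X \<in> C \<Longrightarrow> X \<noteq> [] \<Longrightarrow> (Y, butlast X, f) \<in> Mor \<Longrightarrow> cc_pb M f Y X \<in> C \<and> cc_q M Y f X \<in> Mor"
  using subsystem unfolding cc_subsystem_def by fast

lemma mor_sf: "(Y, X, f) \<in> Mor \<Longrightarrow> X \<noteq> [] \<Longrightarrow> (Y, cc_pb M (cc_pf M Y X f) Y X, cc_sf M Y X f) \<in> Mor"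
  using subsystem unfolding cc_subsystem_def by fast

lemma mem_tilde_ob: "(X, r) \<in> tilde_ob M Mor \<longleftrightarrow> X \<noteq> [] \<and> (butlast X, X, cc_id M (butlast X) @ [r]) \<in> Mor"
  using mor_D by (intro mem_tilde_ob_iff) blast

lemma tilde_ob_D:
  assumes "(X, r) \<in> tilde_ob M Mor"
  shows "X \<in> C" "butlast X \<in> C" "r \<in> Rc M (length X - 1)"
proof -
  have "X \<noteq> []" and m: "(butlast X, X, cc_id M (butlast X) @ [r]) \<in> Mor"
    using assms mem_tilde_ob by auto
  have "cc_hom M (butlast X) X (cc_id M (butlast X) @ [r])"
    using mor_D[OF m] by simp
  then have "r \<in> Rc M (length (butlast X))"
    unfolding cc_hom_def by (metis length_append_singleton length_cc_id lessI nth_cc_id_snoc_length)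
  then show "X \<in> C" "butlast X \<in> C" "r \<in> Rc M (length X - 1)"
    using mor_D[OF m] by auto
qed

lemma term_of_mor:
  assumes h: "(Y, X, h) \<in> Mor" and ne: "X \<noteq> []"
  shows "(Y @ [rho M (length X - 1) (length Y) (tf h) (last X)], last h) \<in> tilde_ob M Mor"
proof -
  have "cc_hom M Y X h"
    using mor_D[OF h] by simp
  then show ?thesis
    using mor_sf[OF h ne] by (simp add: mem_tilde_ob cc_sf_eq[OF _ ne] cc_pb_cc_pf[OF _ ne])
qed

lemma tilde_ob_subst:
  assumes w: "(Y, X, w) \<in> Mor" and J: "(X @ [R], r) \<in> tilde_ob M Mor"
  shows "(Y @ [rho M (length X) (length Y) (tf w) R], bnd M (length X) (length Y) (tf w) r) \<in> tilde_ob M Mor"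
proof -
  define h where "h = cc_comp M (length Y) w (cc_id M X @ [r])"
  have s: "(X, X @ [R], cc_id M X @ [r]) \<in> Mor"
    using J mem_tilde_ob by simp
  have hw: "cc_hom M Y X w" and R: "R \<in> Lc M (length X)"
    using mor_D[OF w] mor_D[OF s] by (simp_all add: cc_hom_def cc_ob_snoc)
  have kw: "kl_map M (length X) (length Y) (tf w)" and lw: "length w = length X"
    using cc_hom_kl_map[OF hw] hw by (simp_all add: cc_hom_def)
  have "(Y @ [rho M (length X) (length Y) (tf h) R], last h) \<in> tilde_ob M Mor"
    using term_of_mor[OF mor_comp[OF w s]] by (simp add: h_def)
  moreover have "last h = bnd M (length X) (length Y) (tf w) r"
    using lw by (simp add: h_def cc_comp_def)
  moreover have "tf w l = tf h l" if "1 \<le> l" "l \<le> length X" for l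
  proof -
    have "l - 1 < length X"
      using that by simp
    then have "tf h l = bnd M (length X) (length Y) (tf w) (eta M (length X) l)"
      using that lw by (simp add: h_def tf_def nth_append)
    then show ?thesis
      using bnd_eta[OF kw that] by simp
  qed
  then have "rho M (length X) (length Y) (tf w) R = rho M (length X) (length Y) (tf h) R"
    using rho_cong[OF kw _ R] by blast
  ultimately show ?thesis
    by simp
qed

lemma mor_lift:
  assumes w: "(Y, X, w) \<in> Mor" and XD: "X @ D \<in> C"
  shows "\<exists>w'. (Y @ subst_tele M (tf w) (length X) (length Y) D, X @ D, w') \<in> Mor \<and>
    (\<forall>l. 1 \<le> l \<longrightarrow> l \<le> length X + length D \<longrightarrow> tf w' l = lift M (tf w) (length X) (length Y) (length D) l)"
  using XD
proof (induction D rule: rev_induct)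
  have kw: "kl_map M (length X) (length Y) (tf w)"
    using mor_D[OF w] cc_hom_kl_map by blast
  {
    case Nil
    show ?case
      using w lift_0[OF kw] by auto
  next
    case (snoc E D)
    define Y' where "Y' = Y @ subst_tele M (tf w) (length X) (length Y) D"
    have lY': "length Y' = length Y + length D"
      by (simp add: Y'_def)
    have "X @ D \<in> C"
      using ob_ft[OF snoc.prems] by (simp flip: append_assoc)
    then obtain w' where w': "(Y', X @ D, w') \<in> Mor"
      and tf_w': "\<And>l. 1 \<le> l \<Longrightarrow> l \<le> length X + length D \<Longrightarrow>
        tf w' l = lift M (tf w) (length X) (length Y) (length D) l"
      using snoc.IH Y'_def by blast
    have kw': "kl_map M (length X + length D) (length Y + length D) (tf w')"
      using mor_D[OF w'] cc_hom_kl_map lY' by fastforce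
    have E: "E \<in> Lc M (length X + length D)"
      using ob_wf[OF snoc.prems] by (simp add: cc_ob_snoc flip: append_assoc)
    have q: "cc_pb M w' Y' (X @ D @ [E]) \<in> C \<and> cc_q M Y' w' (X @ D @ [E]) \<in> Mor"
      using ob_pb[OF snoc.prems _ ] w' by (simp add: butlast_append)
    have "rho M (length X + length D) (length Y + length D) (tf w') E
        = rho M (length X + length D) (length Y + length D) (lift M (tf w) (length X) (length Y) (length D)) E"
      using tf_w' by (intro rho_cong[OF kw' _ E]) simp
    then have "cc_pb M w' Y' (X @ D @ [E]) = Y @ subst_tele M (tf w) (length X) (length Y) (D @ [E])"
      by (simp add: cc_pb_def Y'_def subst_tele_snoc)
    moreover have "tf (cc_ql M w' Y') l = lift M (tf w) (length X) (length Y) (Suc (length D)) l"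
      if "1 \<le> l" "l \<le> length X + Suc (length D)" for l
    proof (cases "l \<le> length X + length D")
      case True
      then show ?thesis
        using that mor_D[OF w'] tf_w' lift_Suc[OF kw] lY'
        by (simp add: tf_cc_ql cc_hom_def)
    next
      case False
      then have "l = Suc (length w')"
        using that mor_D[OF w'] by (simp add: cc_hom_def)
      then show ?thesis
        using lY' mor_D[OF w'] by (simp add: tf_def cc_ql_def lift_def cc_hom_def nth_append add.commute)
    qed
    ultimately show ?case
      using q by (auto simp: cc_q_def)
  }
qed

lemma tilde_ob_subst_tele:
  assumes w: "(Y, X, w) \<in> Mor" and J: "(X @ D @ [R], r) \<in> tilde_ob M Mor"
    and \<tau>: "\<And>j l. j \<le> length D \<Longrightarrow> 1 \<le> l \<Longrightarrow> l \<le> length X + j \<Longrightarrow>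
      lift M (tf w) (length X) (length Y) j l = \<tau> j l"
  shows "(Y @ map (\<lambda>j. rho M (length X + j) (length Y + j) (\<tau> j) (D ! j)) [0..<length D] @
            [rho M (length X + length D) (length Y + length D) (\<tau> (length D)) R],
          bnd M (length X + length D) (length Y + length D) (\<tau> (length D)) r) \<in> tilde_ob M Mor"
proof -
  have kw: "kl_map M (length X) (length Y) (tf w)"
    using mor_D[OF w] cc_hom_kl_map by blast
  have kl: "kl_map M (length X + j) (length Y + j) (lift M (tf w) (length X) (length Y) j)" for j
    using kl_map_lift[OF kw] .
  have obXDR: "cc_ob M (X @ D @ [R])"
    using ob_wf[OF tilde_ob_D(1)[OF J]] .
  then have DR: "\<forall>j<length (D @ [R]). (D @ [R]) ! j \<in> Lc M (length X + j)"
    unfolding cc_ob_append by blast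
  have D: "D ! j \<in> Lc M (length X + j)" if "j < length D" for j
    using DR[rule_format, of j] that by (simp add: nth_append)
  have R: "R \<in> Lc M (length X + length D)"
    using DR[rule_format, of "length D"] by simp
  have r: "r \<in> Rc M (length X + length D)"
    using tilde_ob_D(3)[OF J] by simp
  obtain w' where w': "(Y @ subst_tele M (tf w) (length X) (length Y) D, X @ D, w') \<in> Mor"
    and tf_w': "\<And>l. 1 \<le> l \<Longrightarrow> l \<le> length X + length D \<Longrightarrow>
      tf w' l = lift M (tf w) (length X) (length Y) (length D) l"
    using mor_lift[OF w] tilde_ob_D(2)[OF J] by (auto simp: butlast_append)
  have kw': "kl_map M (length X + length D) (length Y + length D) (tf w')"
    using mor_D[OF w'] cc_hom_kl_map by fastforce
  have "subst_tele M (tf w) (length X) (length Y) D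
      = map (\<lambda>j. rho M (length X + j) (length Y + j) (\<tau> j) (D ! j)) [0..<length D]"
    by (rule nth_equalityI) (simp_all add: rho_cong[OF kl \<tau> D])
  moreover have "rho M (length X + length D) (length Y + length D) (tf w') R
      = rho M (length X + length D) (length Y + length D) (\<tau> (length D)) R"
    using rho_cong[OF kw' _ R] tf_w' \<tau> by simp
  moreover have "bnd M (length X + length D) (length Y + length D) (tf w') r
      = bnd M (length X + length D) (length Y + length D) (\<tau> (length D)) r"
    using bnd_cong[OF kw' _ r] tf_w' \<tau> by simp
  ultimately show ?thesis
    using tilde_ob_subst[OF w', of R r] J by simp
qed

lemma tilde_ob_wk:
  assumes GT: "G @ [T] \<in> C" and J: "(G @ D @ [R], r) \<in> tilde_ob M Mor"
  shows "(G @ [T] @ wk_seq M (length G) D @ [wk_L M (length G) (length G + length D) R],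
          wk_R M (length G) (length G + length D) r) \<in> tilde_ob M Mor"
proof -
  have p: "(G @ [T], G, cc_pl M (G @ [T])) \<in> Mor"
    using ob_ft[OF GT] by (simp add: cc_p_def)
  show ?thesis
    using tilde_ob_subst_tele[OF p J, of "\<lambda>j. wk_map M (length G) (length G + j)"]
    by (simp add: lift_eq_wk_map tf_def wk_seq_def wk_L_def wk_R_def)
qed

lemma tilde_ob_sb:
  assumes S: "(G @ [S], s) \<in> tilde_ob M Mor" and J: "(G @ [S] @ D @ [R], r) \<in> tilde_ob M Mor"
  shows "(G @ sb_seq M (length G) s D @ [sb_L M (length G) s (Suc (length G) + length D) R],
         sb_R M (length G) s (Suc (length G) + length D) r) \<in> tilde_ob M Mor"
proof -
  have sec: "(G, G @ [S], cc_id M G @ [s]) \<in> Mor"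
    using S mem_tilde_ob by simp
  have "lift M (tf (cc_id M G @ [s])) (Suc (length G)) (length G) j l = sb_map M (length G) s (Suc (length G + j)) l"
    if "1 \<le> l" "l \<le> Suc (length G + j)" for j l
    using lift_eq_sb_map[OF tf_cc_id_snoc that] by simp
  then show ?thesis
    using tilde_ob_subst_tele[OF sec, of D R r "\<lambda>j. sb_map M (length G) s (Suc (length G + j))"] J
    by (simp add: sb_seq_def sb_L_def sb_R_def)
qed

lemma tilde_ob_var:
  assumes GT: "G @ [T] \<in> C"
  shows "(G @ [T, wk_L M (length G) (length G) T], eta M (Suc (length G)) (Suc (length G))) \<in> tilde_ob M Mor"
proof -
  have "T \<in> Lc M (length G)"
    using ob_wf[OF GT] by (simp add: cc_ob_snoc)
  then have "rho M (length G) (Suc (length G)) (tf (cc_id M (G @ [T]))) T = wk_L M (length G) (length G) T"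
    unfolding wk_L_def by (intro rho_cong kl_map_tf) (auto intro: eta_in_Rc simp: tf_def wk_map_def nth_append)
  moreover have "last (cc_id M (G @ [T])) = eta M (Suc (length G)) (Suc (length G))"
    by (simp add: cc_id_def)
  ultimately show ?thesis
    using term_of_mor[OF ob_id[OF GT]] by simp
qed

end

theorem proposition4p1:
  fixes M :: "('r, 'l) monmod"
    and C :: "'l list set"
    and Ct :: "('l list \<times> 'r) set"
  assumes "fin_monad M" and "fin_module M"
    and "\<forall>G\<in>C. cc_ob M G"
    and "\<forall>(X, r)\<in>Ct. X \<noteq> [] \<and> cc_ob M X \<and> r \<in> Rc M (length X - 1)"
  shows "(\<exists>Mor. cc_subsystem M C Mor \<and> tilde_ob M Mor = Ct) \<longleftrightarrow>
    ([] \<in> C \<and>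
     (\<forall>G T. G @ [T] \<in> C \<longrightarrow> G \<in> C) \<and>
     (\<forall>G R r. (G @ [R], r) \<in> Ct \<longrightarrow> G @ [R] \<in> C) \<and>
     (\<forall>G T D R r. G @ [T] \<in> C \<and> (G @ D @ [R], r) \<in> Ct \<longrightarrow>
        (G @ [T] @ wk_seq M (length G) D @ [wk_L M (length G) (length G + length D) R],
         wk_R M (length G) (length G + length D) r) \<in> Ct) \<and>
     (\<forall>G S s D R r. (G @ [S], s) \<in> Ct \<and> (G @ [S] @ D @ [R], r) \<in> Ct \<longrightarrow>
        (G @ sb_seq M (length G) s D @ [sb_L M (length G) s (Suc (length G) + length D) R],
         sb_R M (length G) s (Suc (length G) + length D) r) \<in> Ct) \<and>
     (\<forall>G T. G @ [T] \<in> C \<longrightarrow>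
        (G @ [T, wk_L M (length G) (length G) T], eta M (Suc (length G)) (Suc (length G))) \<in> Ct))"
    (is "?subsystem \<longleftrightarrow> ?conditions")
proof
  assume ?subsystem
  then obtain Mor where "cc_subsystem M C Mor" and Ct: "tilde_ob M Mor = Ct"
    by blast
  then interpret cc_subsystem_of M C Mor
    using assms(1,2) by unfold_locales
  have "G \<in> C" if "G @ [T] \<in> C" for G T
    using ob_ft[OF that] by simp
  then show ?conditions
    unfolding Ct[symmetric] using ob_Nil tilde_ob_D(1) tilde_ob_wk tilde_ob_sb tilde_ob_var by blast
next
  assume conditions: ?conditions
  interpret cc_conditions M C Ct
  proof unfold_locales
    show "fin_monad M" "fin_module M"
      by fact+
    show "\<And>G. G \<in> C \<Longrightarrow> cc_ob M G"
      using assms(3) by blast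
    show "\<And>X r. (X, r) \<in> Ct \<Longrightarrow> X \<noteq> [] \<and> cc_ob M X \<and> r \<in> Rc M (length X - 1)"
      using assms(4) by blast
  qed (use conditions in blast)+
  show ?subsystem
    using cc_subsystem_typed_mor tilde_ob_typed_mor by blast
qed

end
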